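(* Let $G = K_m \otimes K_n$ with $m \geq 3$ and $m \leq n \leq 2m-2$. Then $\dim(G) = \left\lceil \frac{2}{3}(m+n-2) \right\rceil$.
   Context: $K_r$ is the complete graph on $r$ vertices. The tensor product $G\otimes H$ has vertex set $V(G)\times V(H)$, with $(u,v)$ adjacent to $(x,y)$ iff $ux\in E(G)$ and $vy\in E(H)$. For a connected graph and an ordered set $W=\{w_1,\dots,w_k\}$ of vertices, $r(v\mid W)=(d(v,w_1),\dots,d(v,w_k))$; $W$ is resolving if distinct vertices have distinct representations; $\dim(G)$ is the minimum size of a resolving set. *)

theory Defs
  imports Complex_Main
begin

text \<open>A (simple) graph is given by a vertex set V and a symmetric adjacency relation E.\<close>

definition complete_verts :: "nat \<Rightarrow> nat set" where
  "complete_verts r = {0..<r}"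

definition complete_adj :: "nat \<Rightarrow> nat \<Rightarrow> bool" where
  "complete_adj u v \<longleftrightarrow> u \<noteq> v"

definition tensor_verts :: "'a set \<Rightarrow> 'b set \<Rightarrow> ('a \<times> 'b) set" where
  "tensor_verts V1 V2 = V1 \<times> V2"

definition tensor_adj :: "('a \<Rightarrow> 'a \<Rightarrow> bool) \<Rightarrow> ('b \<Rightarrow> 'b \<Rightarrow> bool)
    \<Rightarrow> ('a \<times> 'b) \<Rightarrow> ('a \<times> 'b) \<Rightarrow> bool" where
  "tensor_adj E1 E2 p q \<longleftrightarrow> E1 (fst p) (fst q) \<and> E2 (snd p) (snd q)"

definition is_walk :: "'a set \<Rightarrow> ('a \<Rightarrow> 'a \<Rightarrow> bool) \<Rightarrow> 'a list \<Rightarrow> bool" where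
  "is_walk V E xs \<longleftrightarrow> xs \<noteq> [] \<and> set xs \<subseteq> V \<and>
     (\<forall>i. Suc i < length xs \<longrightarrow> E (xs ! i) (xs ! Suc i))"

definition gdist :: "'a set \<Rightarrow> ('a \<Rightarrow> 'a \<Rightarrow> bool) \<Rightarrow> 'a \<Rightarrow> 'a \<Rightarrow> nat" where
  "gdist V E u v = (LEAST k. \<exists>xs. is_walk V E xs \<and> hd xs = u \<and> last xs = v \<and> length xs = Suc k)"

definition connected_graph :: "'a set \<Rightarrow> ('a \<Rightarrow> 'a \<Rightarrow> bool) \<Rightarrow> bool" where
  "connected_graph V E \<longleftrightarrow> V \<noteq> {} \<and>
     (\<forall>u\<in>V. \<forall>v\<in>V. \<exists>xs. is_walk V E xs \<and> hd xs = u \<and> last xs = v)"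

definition resolving :: "'a set \<Rightarrow> ('a \<Rightarrow> 'a \<Rightarrow> bool) \<Rightarrow> 'a set \<Rightarrow> bool" where
  "resolving V E W \<longleftrightarrow> W \<subseteq> V \<and>
     (\<forall>x\<in>V. \<forall>y\<in>V. (\<forall>w\<in>W. gdist V E x w = gdist V E y w) \<longrightarrow> x = y)"

definition metric_dim :: "'a set \<Rightarrow> ('a \<Rightarrow> 'a \<Rightarrow> bool) \<Rightarrow> nat" where
  "metric_dim V E = (LEAST k. \<exists>W. finite W \<and> card W = k \<and> resolving V E W)"

end

theory Submission
  imports Defs
begin

(* The cells of an m \<times> n board are the vertices of K_m \<otimes> K_n: distinct cells are adjacent iff they
   share no line (row or column), and for m, n \<ge> 3 cells on a common line are at distance 2. So a
   landmark w only records whether a cell is w, lies on a line through w, or neither.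
   A resolving set W leaves at most one row and one column empty, contains at most one point that is
   isolated (alone on both of its lines), and never an isolated point together with an empty row and
   an empty column. Each occupied line carries either a point of W alone on it or two points of W,
   and double counting gives 2(m + n) \<le> 3|W| + 4.
   Conversely, a set without isolated points that misses at most one row and one column resolves.
   On the (m - 1) \<times> (n - 1) board such a set is assembled from dominoes (two points covering three
   lines) with 3|W| \<le> 2(m + n - 2) + 2, provided neither side exceeds twice the other; this is where
   n \<le> 2m - 2 enters. *)

definition same_line :: "'a \<times> 'b \<Rightarrow> 'a \<times> 'b \<Rightarrow> bool" where
  "same_line x y \<longleftrightarrow> fst x = fst y \<or> snd x = snd y"

definition complete_tensor_dist :: "'a \<times> 'b \<Rightarrow> 'a \<times> 'b \<Rightarrow> nat" where
  "complete_tensor_dist x y = (if x = y then 0 else if same_line x y then 2 else 1)"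

definition complete_tensor_resolving :: "'a set \<Rightarrow> 'b set \<Rightarrow> ('a \<times> 'b) set \<Rightarrow> bool" where
  "complete_tensor_resolving A B W \<longleftrightarrow> W \<subseteq> A \<times> B \<and>
     (\<forall>x\<in>A \<times> B. \<forall>y\<in>A \<times> B.
        (\<forall>w\<in>W. complete_tensor_dist x w = complete_tensor_dist y w) \<longrightarrow> x = y)"

definition isolated_in :: "('a \<times> 'b) set \<Rightarrow> 'a \<times> 'b \<Rightarrow> bool" where
  "isolated_in W w \<longleftrightarrow> (\<forall>w'\<in>W. same_line w' w \<longrightarrow> w' = w)"

lemma same_line_swap [simp]: "same_line (prod.swap x) (prod.swap y) \<longleftrightarrow> same_line x y"
  by (auto simp: same_line_def)

lemma complete_tensor_dist_swap [simp]:
  "complete_tensor_dist (prod.swap x) (prod.swap y) = complete_tensor_dist x y"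
  by (cases x; cases y) (auto simp: complete_tensor_dist_def same_line_def)

lemma complete_tensor_dist_eq_iff:
  assumes "x \<noteq> w" "y \<noteq> w"
  shows "complete_tensor_dist x w = complete_tensor_dist y w \<longleftrightarrow> (same_line x w \<longleftrightarrow> same_line y w)"
  using assms by (simp add: complete_tensor_dist_def)

lemma isolated_in_swap [simp]:
  "isolated_in (prod.swap ` W) (prod.swap w) \<longleftrightarrow> isolated_in W w"
  by (simp add: isolated_in_def inj_eq)

lemma isolated_in_anti_mono: "isolated_in W' w \<Longrightarrow> W \<subseteq> W' \<Longrightarrow> isolated_in W w"
  by (auto simp: isolated_in_def)

lemma isolated_in_iff:
  "isolated_in W (a, d) \<longleftrightarrow> (\<forall>w\<in>W. fst w = a \<or> snd w = d \<longrightarrow> w = (a, d))"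
  by (simp add: isolated_in_def same_line_def)

subsection \<open>Distances in the tensor product of complete graphs\<close>

lemma tensor_adj_complete_iff:
  "tensor_adj complete_adj complete_adj x y \<longleftrightarrow> \<not> same_line x y"
  by (simp add: tensor_adj_def complete_adj_def same_line_def)

lemma tensor_verts_complete: "tensor_verts (complete_verts m) (complete_verts n) = {..<m} \<times> {..<n}"
  by (simp add: tensor_verts_def complete_verts_def atLeast0LessThan)

lemma gdist_eqI:
  assumes "is_walk V E xs" "hd xs = u" "last xs = v" "length xs = Suc k"
    and "\<And>ys. is_walk V E ys \<Longrightarrow> hd ys = u \<Longrightarrow> last ys = v \<Longrightarrow> Suc k \<le> length ys"
  shows "gdist V E u v = k"
  unfolding gdist_def
proof (rule Least_equality)
  show "\<exists>xs. is_walk V E xs \<and> hd xs = u \<and> last xs = v \<and> length xs = Suc k"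
    using assms(1-4) by blast
qed (use assms(5) in fastforce)

lemma exists_third: "3 \<le> (m::nat) \<Longrightarrow> \<exists>p<m. p \<noteq> a \<and> p \<noteq> c"
proof -
  assume "3 \<le> m"
  have "\<exists>p\<in>{0, 1, 2::nat}. p \<noteq> a \<and> p \<noteq> c" by auto
  then show ?thesis using \<open>3 \<le> m\<close> by force
qed

lemma gdist_tensor_complete:
  assumes "3 \<le> m" "3 \<le> n" and x: "x \<in> {..<m} \<times> {..<n}" and y: "y \<in> {..<m} \<times> {..<n}"
  shows "gdist (tensor_verts (complete_verts m) (complete_verts n))
           (tensor_adj complete_adj complete_adj) x y = complete_tensor_dist x y"
proof -
  let ?V = "tensor_verts (complete_verts m) (complete_verts n)"
  let ?E = "tensor_adj complete_adj complete_adj"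
  obtain xs where "is_walk ?V ?E xs" "hd xs = x" "last xs = y"
    "length xs = Suc (complete_tensor_dist x y)"
  proof -
    consider "x = y" | "x \<noteq> y" "\<not> same_line x y" | "x \<noteq> y" "same_line x y"
      by blast
    then show thesis
    proof cases
      case 1
      then show thesis
        using x by (intro that[of "[x]"])
          (auto simp: is_walk_def tensor_verts_complete complete_tensor_dist_def)
    next
      case 2
      then show thesis
        using x y by (intro that[of "[x, y]"])
          (auto simp: is_walk_def tensor_verts_complete tensor_adj_complete_iff
             complete_tensor_dist_def less_Suc_eq)
    next
      case 3
      obtain p where "p < m" "p \<noteq> fst x" "p \<noteq> fst y"
        using exists_third[OF assms(1)] by blast
      moreover obtain q where "q < n" "q \<noteq> snd x" "q \<noteq> snd y"
        using exists_third[OF assms(2)] by blast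
      ultimately show thesis
        using x y 3 by (intro that[of "[x, (p, q), y]"])
          (auto simp: is_walk_def tensor_verts_complete tensor_adj_complete_iff same_line_def
             complete_tensor_dist_def less_Suc_eq)
    qed
  qed
  moreover have "Suc (complete_tensor_dist x y) \<le> length ys"
    if walk: "is_walk ?V ?E ys" and ends: "hd ys = x" "last ys = y" for ys
  proof -
    have "ys \<noteq> []" using walk by (simp add: is_walk_def)
    then have "length ys > 0" by simp
    then have "length ys = 1 \<or> length ys = 2 \<or> 3 \<le> length ys"
      by linarith
    then consider "length ys = 1" | "length ys = 2" | "3 \<le> length ys"
      by blast
    then show ?thesis
    proof cases
      case 1
      then have "x = y" using ends by (cases ys) auto
      then show ?thesis using 1 by (simp add: complete_tensor_dist_def)
    next
      case 2
      have "?E (ys ! 0) (ys ! 1)" using walk 2 by (simp add: is_walk_def)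
      moreover have "ys ! 0 = x" "ys ! 1 = y"
        using ends 2 \<open>ys \<noteq> []\<close> by (simp_all add: hd_conv_nth last_conv_nth)
      ultimately have "\<not> same_line x y" by (simp add: tensor_adj_complete_iff)
      then show ?thesis using 2 by (auto simp: complete_tensor_dist_def same_line_def)
    qed (auto simp: complete_tensor_dist_def)
  qed
  ultimately show ?thesis
    by (rule gdist_eqI)
qed

lemma resolving_tensor_complete_iff:
  assumes "3 \<le> m" "3 \<le> n"
  shows "resolving (tensor_verts (complete_verts m) (complete_verts n))
           (tensor_adj complete_adj complete_adj) W \<longleftrightarrow>
         complete_tensor_resolving {..<m} {..<n} W"
proof (cases "W \<subseteq> {..<m} \<times> {..<n}")
  case True
  then have "gdist (tensor_verts (complete_verts m) (complete_verts n))
      (tensor_adj complete_adj complete_adj) x w = complete_tensor_dist x w"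
    if "x \<in> {..<m} \<times> {..<n}" "w \<in> W" for x w
    using gdist_tensor_complete[OF assms that(1)] that(2) by blast
  then show ?thesis
    using True unfolding resolving_def complete_tensor_resolving_def tensor_verts_complete
    by (simp cong: ball_cong)
next
  case False
  then show ?thesis
    unfolding resolving_def complete_tensor_resolving_def tensor_verts_complete by simp
qed

subsection \<open>Resolving sets of the tensor product of complete graphs\<close>

lemma complete_tensor_resolvingD:
  assumes "complete_tensor_resolving A B W" "x \<in> A \<times> B" "y \<in> A \<times> B"
    and "\<And>w. w \<in> W \<Longrightarrow> complete_tensor_dist x w = complete_tensor_dist y w"
  shows "x = y"
proof -
  have "\<forall>x\<in>A \<times> B. \<forall>y\<in>A \<times> B.
      (\<forall>w\<in>W. complete_tensor_dist x w = complete_tensor_dist y w) \<longrightarrow> x = y"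
    using assms(1) unfolding complete_tensor_resolving_def by (rule conjunct2)
  then show ?thesis using assms(2-4) by blast
qed

lemma complete_tensor_resolving_subset:
  "complete_tensor_resolving A B W \<Longrightarrow> W \<subseteq> A \<times> B"
  by (simp add: complete_tensor_resolving_def)

lemma complete_tensor_resolving_swap:
  assumes "complete_tensor_resolving A B W"
  shows "complete_tensor_resolving B A (prod.swap ` W)"
  unfolding complete_tensor_resolving_def
proof (intro conjI ballI impI)
  show "prod.swap ` W \<subseteq> B \<times> A"
    using complete_tensor_resolving_subset[OF assms] by auto
  fix x y
  assume "x \<in> B \<times> A" "y \<in> B \<times> A"
    and codes: "\<forall>w\<in>prod.swap ` W. complete_tensor_dist x w = complete_tensor_dist y w"
  have "\<forall>w\<in>W. complete_tensor_dist (prod.swap x) w = complete_tensor_dist (prod.swap y) w"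
    using codes complete_tensor_dist_swap[of "prod.swap x"] complete_tensor_dist_swap[of "prod.swap y"]
    by simp
  moreover have "prod.swap x \<in> A \<times> B" "prod.swap y \<in> A \<times> B"
    using \<open>x \<in> B \<times> A\<close> \<open>y \<in> B \<times> A\<close> by (auto simp: mem_Times_iff)
  ultimately have "prod.swap x = prod.swap y"
    by (intro complete_tensor_resolvingD[OF assms]) auto
  then show "x = y" by (simp add: inj_eq)
qed

lemma card_unoccupied_rows_le1:
  assumes res: "complete_tensor_resolving A B W" and "finite A" "B \<noteq> {}"
  shows "card (A - fst ` W) \<le> 1"
proof -
  obtain b where "b \<in> B" using \<open>B \<noteq> {}\<close> by blast
  have "i = i'" if "i \<in> A - fst ` W" "i' \<in> A - fst ` W" for i i'
  proof -
    have "complete_tensor_dist (i, b) w = complete_tensor_dist (i', b) w" if "w \<in> W" for w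
    proof -
      have "fst w \<noteq> i" "fst w \<noteq> i'"
        using \<open>w \<in> W\<close> \<open>i \<in> A - fst ` W\<close> \<open>i' \<in> A - fst ` W\<close> by (metis Diff_iff image_eqI)+
      then show ?thesis by (cases w) (simp add: complete_tensor_dist_def same_line_def)
    qed
    then have "(i, b) = (i', b)"
      using that \<open>b \<in> B\<close> by (intro complete_tensor_resolvingD[OF res]) auto
    then show ?thesis by simp
  qed
  then show ?thesis
    using \<open>finite A\<close> by (simp add: card_le_Suc0_iff_eq)
qed

lemma card_unoccupied_cols_le1:
  assumes "complete_tensor_resolving A B W" and "finite B" "A \<noteq> {}"
  shows "card (B - snd ` W) \<le> 1"
  using card_unoccupied_rows_le1[OF complete_tensor_resolving_swap[OF assms(1)] assms(2,3)]
  by (simp add: image_image)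

text \<open>Under these hypotheses \<open>(a, b)\<close> and \<open>(c, d)\<close> are at distance 2 from \<open>(a, d)\<close> and
  \<open>(c, b)\<close> and at distance 1 from every other point of \<open>W\<close>.\<close>

lemma resolving_opposite_corners:
  assumes res: "complete_tensor_resolving A B W"
    and "a \<in> A" "c \<in> A" "b \<in> B" "d \<in> B"
    and ad: "\<forall>w\<in>W. fst w = a \<or> snd w = d \<longrightarrow> w = (a, d)"
    and cb: "\<forall>w\<in>W. fst w = c \<or> snd w = b \<longrightarrow> w = (c, b)"
  shows "a = c \<or> b = d"
proof (rule ccontr)
  assume "\<not> (a = c \<or> b = d)"
  then have "complete_tensor_dist (a, b) w = complete_tensor_dist (c, d) w" if "w \<in> W" for w
    using ad cb that by (cases w) (auto simp: complete_tensor_dist_def same_line_def)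
  then have "(a, b) = (c, d)"
    using assms(2-5) by (intro complete_tensor_resolvingD[OF res]) auto
  then show False using \<open>\<not> (a = c \<or> b = d)\<close> by simp
qed

lemma card_isolated_le1:
  assumes res: "complete_tensor_resolving A B W" and "finite W"
  shows "card {w \<in> W. isolated_in W w} \<le> 1"
proof -
  have "w1 = w2" if "w1 \<in> W" "isolated_in W w1" "w2 \<in> W" "isolated_in W w2" for w1 w2
  proof -
    obtain a d c b where w: "w1 = (a, d)" "w2 = (c, b)" by (cases w1, cases w2)
    have "a \<in> A" "d \<in> B" "c \<in> A" "b \<in> B"
      using complete_tensor_resolving_subset[OF res] that(1,3) w by auto
    then have "a = c \<or> b = d"
      using that(2,4) w by (intro resolving_opposite_corners[OF res]) (simp_all add: isolated_in_iff)
    then have "same_line w2 w1" using w by (auto simp: same_line_def)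
    then show ?thesis using that(2,3) unfolding isolated_in_def by blast
  qed
  then show ?thesis
    using \<open>finite W\<close> by (simp add: card_le_Suc0_iff_eq)
qed

lemma isolated_imp_all_rows_or_cols_occupied:
  assumes res: "complete_tensor_resolving A B W" and "w \<in> W" "isolated_in W w"
  shows "A \<subseteq> fst ` W \<or> B \<subseteq> snd ` W"
proof (rule ccontr)
  assume "\<not> (A \<subseteq> fst ` W \<or> B \<subseteq> snd ` W)"
  then obtain c b where c: "c \<in> A" "c \<notin> fst ` W" and b: "b \<in> B" "b \<notin> snd ` W" by blast
  obtain a d where w: "w = (a, d)" by (cases w)
  have "a \<in> A" "d \<in> B" using complete_tensor_resolving_subset[OF res] assms(2) w by auto
  moreover have "\<forall>w'\<in>W. fst w' = c \<or> snd w' = b \<longrightarrow> w' = (c, b)"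
    using c(2) b(2) by (metis image_eqI)
  ultimately have "a = c \<or> b = d"
    using assms(3) w c(1) b(1) by (intro resolving_opposite_corners[OF res]) (simp_all add: isolated_in_iff)
  moreover have "a \<in> fst ` W" "d \<in> snd ` W" using assms(2) w by force+
  ultimately show False using c(2) b(2) by blast
qed

lemma card_image_twice_le:
  assumes "finite W"
  shows "2 * card (f ` W) \<le> card W + card {w \<in> W. \<forall>w'\<in>W. f w' = f w \<longrightarrow> w' = w}"
    (is "_ \<le> _ + card ?S")
proof -
  let ?R = "W - ?S"
  have fibre: "2 \<le> card {w \<in> ?R. f w = y}" if y: "y \<in> f ` ?R" for y
  proof -
    obtain w where w: "w \<in> ?R" "f w = y" using y by blast
    then obtain w' where w': "w' \<in> W" "f w' = f w" "w' \<noteq> w" by blast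
    then have "w' \<in> ?R" using w by auto
    then have "{w, w'} \<subseteq> {w \<in> ?R. f w = y}" using w w' by auto
    moreover have "finite {w \<in> ?R. f w = y}" using \<open>finite W\<close> by simp
    ultimately have "card {w, w'} \<le> card {w \<in> ?R. f w = y}" by (rule card_mono[rotated])
    then show ?thesis using w'(3) by simp
  qed
  have "2 * card (f ` ?R) = (\<Sum>y\<in>f ` ?R. 2)" by simp
  also have "\<dots> \<le> (\<Sum>y\<in>f ` ?R. card {w \<in> ?R. f w = y})"
    by (rule sum_mono) (rule fibre)
  also have "\<dots> = card ?R"
    using sum.image_gen[of ?R "\<lambda>_. 1 :: nat" f] \<open>finite W\<close> by simp
  finally have R: "2 * card (f ` ?R) \<le> card ?R" .
  have "f ` W = f ` ?S \<union> f ` ?R" by blast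
  then have "card (f ` W) \<le> card ?S + card (f ` ?R)"
    using card_Un_le[of "f ` ?S" "f ` ?R"] card_image_le[of ?S f] \<open>finite W\<close> by simp
  moreover have "card ?R = card W - card ?S"
    using \<open>finite W\<close> by (simp add: card_Diff_subset)
  moreover have "card ?S \<le> card W"
    using \<open>finite W\<close> by (simp add: card_mono)
  ultimately show ?thesis using R by linarith
qed

lemma card_occupied_lines_le:
  assumes "finite W"
  shows "2 * (card (fst ` W) + card (snd ` W)) \<le> 3 * card W + card {w \<in> W. isolated_in W w}"
proof -
  let ?R = "{w \<in> W. \<forall>w'\<in>W. fst w' = fst w \<longrightarrow> w' = w}"
  let ?C = "{w \<in> W. \<forall>w'\<in>W. snd w' = snd w \<longrightarrow> w' = w}"
  have "2 * (card (fst ` W) + card (snd ` W)) \<le> 2 * card W + (card ?R + card ?C)"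
    using card_image_twice_le[OF \<open>finite W\<close>, of fst] card_image_twice_le[OF \<open>finite W\<close>, of snd]
    by simp
  also have "card ?R + card ?C = card (?R \<union> ?C) + card (?R \<inter> ?C)"
    using \<open>finite W\<close> by (intro card_Un_Int) auto
  also have "card (?R \<union> ?C) \<le> card W"
    using \<open>finite W\<close> by (intro card_mono) auto
  also have "?R \<inter> ?C = {w \<in> W. isolated_in W w}"
    by (auto simp: isolated_in_def same_line_def)
  finally show ?thesis by simp
qed

theorem complete_tensor_resolving_card_ge:
  assumes res: "complete_tensor_resolving A B W"
    and "finite A" "finite B" "A \<noteq> {}" "B \<noteq> {}"
  shows "2 * (card A + card B) \<le> 3 * card W + 4"
proof -
  let ?T = "{w \<in> W. isolated_in W w}"
  have WAB: "W \<subseteq> A \<times> B" using complete_tensor_resolving_subset[OF res] .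
  then have "finite W" using \<open>finite A\<close> \<open>finite B\<close> finite_subset by blast
  have rows: "card (A - fst ` W) \<le> 1" and cols: "card (B - snd ` W) \<le> 1"
    using card_unoccupied_rows_le1[OF res] card_unoccupied_cols_le1[OF res] assms(2-5) by auto
  have "card ?T + 2 * card (A - fst ` W) + 2 * card (B - snd ` W) \<le> 4"
  proof (cases "?T = {}")
    case True
    then have "card ?T = 0" by (simp only: card.empty)
    then show ?thesis using rows cols by linarith
  next
    case False
    then obtain w where "w \<in> W" "isolated_in W w" by blast
    then have "A - fst ` W = {} \<or> B - snd ` W = {}"
      using isolated_imp_all_rows_or_cols_occupied[OF res] by blast
    then have "card (A - fst ` W) = 0 \<or> card (B - snd ` W) = 0"
      by (metis card.empty)
    then show ?thesis
      using card_isolated_le1[OF res \<open>finite W\<close>] rows cols by linarith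
  qed
  moreover have "card A = card (A - fst ` W) + card (fst ` W)"
  proof -
    have "fst ` W \<subseteq> A" using WAB by auto
    then show ?thesis
      using card_Diff_subset[of "fst ` W" A] card_mono[of A "fst ` W"] \<open>finite A\<close> \<open>finite W\<close>
      by simp
  qed
  moreover have "card B = card (B - snd ` W) + card (snd ` W)"
  proof -
    have "snd ` W \<subseteq> B" using WAB by auto
    then show ?thesis
      using card_Diff_subset[of "snd ` W" B] card_mono[of B "snd ` W"] \<open>finite B\<close> \<open>finite W\<close>
      by simp
  qed
  ultimately show ?thesis
    using card_occupied_lines_le[OF \<open>finite W\<close>] by (simp add: distrib_left)
qed

lemma unoccupied_row_if_same_lines:
  assumes no_isolated: "\<forall>w\<in>W. \<not> isolated_in W w"
    and lines: "\<forall>w\<in>W. same_line (a, b) w \<longleftrightarrow> same_line (c, d) w" and "a \<noteq> c" "b \<noteq> d"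
  shows "a \<notin> fst ` W"
proof
  assume "a \<in> fst ` W"
  then obtain w where w: "w \<in> W" "fst w = a" by blast
  have in_row_a: "w' = (a, d)" if "w' \<in> W" "fst w' = a" for w'
  proof -
    have "same_line (a, b) w'" using that(2) by (simp add: same_line_def)
    then have "same_line (c, d) w'" using lines that(1) by blast
    then have "snd w' = d" using that(2) \<open>a \<noteq> c\<close> by (simp add: same_line_def)
    then show ?thesis using that(2) by (simp add: prod_eq_iff)
  qed
  obtain w' where w': "w' \<in> W" "same_line w' w" "w' \<noteq> w"
    using no_isolated w(1) unfolding isolated_in_def by blast
  have "w = (a, d)" using in_row_a w by blast
  have "fst w' \<noteq> a" using in_row_a w'(1,3) \<open>w = (a, d)\<close> by blast
  then have "snd w' = d" using w'(2) \<open>w = (a, d)\<close> by (simp add: same_line_def)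
  then have "same_line (c, d) w'" by (simp add: same_line_def)
  then have "same_line (a, b) w'" using lines w'(1) by blast
  then show False using \<open>fst w' \<noteq> a\<close> \<open>snd w' = d\<close> \<open>b \<noteq> d\<close> by (simp add: same_line_def)
qed

theorem complete_tensor_resolvingI:
  assumes WAB: "W \<subseteq> A \<times> B" and "finite A" "finite B"
    and rows: "card (A - fst ` W) \<le> 1" and cols: "card (B - snd ` W) \<le> 1"
    and no_isolated: "\<forall>w\<in>W. \<not> isolated_in W w"
  shows "complete_tensor_resolving A B W"
  unfolding complete_tensor_resolving_def
proof (intro conjI ballI impI WAB)
  fix x y
  assume x: "x \<in> A \<times> B" and y: "y \<in> A \<times> B"
    and codes: "\<forall>w\<in>W. complete_tensor_dist x w = complete_tensor_dist y w"
  have "\<forall>i\<in>A - fst ` W. \<forall>i'\<in>A - fst ` W. i = i'"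
    using rows \<open>finite A\<close> card_le_Suc0_iff_eq[of "A - fst ` W"] by simp
  then have row_occupied: "i \<in> fst ` W \<or> i' \<in> fst ` W" if "i \<in> A" "i' \<in> A" "i \<noteq> i'" for i i'
    using that by blast
  have "\<forall>j\<in>B - snd ` W. \<forall>j'\<in>B - snd ` W. j = j'"
    using cols \<open>finite B\<close> card_le_Suc0_iff_eq[of "B - snd ` W"] by simp
  then have col_occupied: "j \<in> snd ` W \<or> j' \<in> snd ` W" if "j \<in> B" "j' \<in> B" "j \<noteq> j'" for j j'
    using that by blast
  show "x = y"
  proof (rule ccontr)
    assume "x \<noteq> y"
    have not_in_W: "z \<notin> W" if "z = x \<or> z = y" for z
    proof
      assume "z \<in> W"
      then have "complete_tensor_dist x z = complete_tensor_dist y z" using codes by blast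
      then show False using that \<open>x \<noteq> y\<close> by (auto simp: complete_tensor_dist_def split: if_splits)
    qed
    have lines: "\<forall>w\<in>W. same_line x w \<longleftrightarrow> same_line y w"
    proof
      fix w assume "w \<in> W"
      then have "x \<noteq> w" "y \<noteq> w" using not_in_W by blast+
      moreover have "complete_tensor_dist x w = complete_tensor_dist y w"
        using codes \<open>w \<in> W\<close> by blast
      ultimately show "same_line x w \<longleftrightarrow> same_line y w"
        by (simp add: complete_tensor_dist_eq_iff)
    qed
    obtain a b c d where xy: "x = (a, b)" "y = (c, d)" by (cases x, cases y)
    consider "a = c" | "b = d" | "a \<noteq> c" "b \<noteq> d" by blast
    then show False
    proof cases
      case 1
      then have "b \<noteq> d" using \<open>x \<noteq> y\<close> xy by simp
      then obtain w where w: "w \<in> W" "snd w = b \<or> snd w = d"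
        using col_occupied[of b d] x y xy by auto
      then have "same_line x w \<and> same_line y w"
        using lines xy by (auto simp: same_line_def)
      then have "w = x \<or> w = y"
        using w(2) xy 1 \<open>b \<noteq> d\<close> by (cases w) (auto simp: same_line_def)
      then show False using w(1) not_in_W by blast
    next
      case 2
      then have "a \<noteq> c" using \<open>x \<noteq> y\<close> xy by simp
      then obtain w where w: "w \<in> W" "fst w = a \<or> fst w = c"
        using row_occupied[of a c] x y xy by auto
      then have "same_line x w \<and> same_line y w"
        using lines xy by (auto simp: same_line_def)
      then have "w = x \<or> w = y"
        using w(2) xy 2 \<open>a \<noteq> c\<close> by (cases w) (auto simp: same_line_def)
      then show False using w(1) not_in_W by blast
    next
      case 3
      have "a \<notin> fst ` W"
        using unoccupied_row_if_same_lines[OF no_isolated] lines xy 3 by simp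
      moreover have "c \<notin> fst ` W"
        using unoccupied_row_if_same_lines[OF no_isolated, of c d a b] lines xy 3 by auto
      ultimately show False using row_occupied[of a c] x y xy 3 by auto
    qed
  qed
qed

subsection \<open>Line covers without isolated points\<close>

definition line_cover :: "nat \<Rightarrow> nat \<Rightarrow> (nat \<times> nat) set \<Rightarrow> bool" where
  "line_cover M N W \<longleftrightarrow> W \<subseteq> {..<M} \<times> {..<N} \<and> fst ` W = {..<M} \<and> snd ` W = {..<N} \<and>
     (\<forall>w\<in>W. \<not> isolated_in W w)"

lemma line_cover_finite: "line_cover M N W \<Longrightarrow> finite W"
  unfolding line_cover_def by (meson finite_SigmaI finite_lessThan finite_subset)

lemma line_cover_swap:
  assumes "line_cover M N W"
  shows "line_cover N M (prod.swap ` W)"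
proof -
  have "prod.swap ` W \<subseteq> {..<N} \<times> {..<M}"
    using assms by (auto simp: line_cover_def)
  moreover have "fst ` prod.swap ` W = {..<N}" "snd ` prod.swap ` W = {..<M}"
    using assms by (simp_all add: line_cover_def image_image)
  moreover have "\<forall>w\<in>prod.swap ` W. \<not> isolated_in (prod.swap ` W) w"
    using assms by (simp add: line_cover_def)
  ultimately show ?thesis unfolding line_cover_def by blast
qed

lemma line_cover_extend:
  assumes "line_cover M N W"
  shows "line_cover (M + 2) (N + 1) (insert (M, N) (insert (Suc M, N) W))"
    (is "line_cover _ _ ?W")
proof -
  have "?W \<subseteq> {..<M + 2} \<times> {..<N + 1}"
    using assms by (auto simp: line_cover_def)
  moreover have "fst ` ?W = {..<M + 2}" "snd ` ?W = {..<N + 1}"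
    using assms by (auto simp: line_cover_def)
  moreover have "\<not> isolated_in ?W w" if "w \<in> ?W" for w
  proof (cases "w \<in> W")
    case True
    then show ?thesis
      using assms isolated_in_anti_mono[of ?W w W] by (auto simp: line_cover_def)
  next
    case False
    then show ?thesis
      using that by (auto simp: isolated_in_def same_line_def)
  qed
  ultimately show ?thesis unfolding line_cover_def by blast
qed

lemma card_line_cover_extend:
  assumes "line_cover M N W"
  shows "card (insert (M, N) (insert (Suc M, N) W)) = card W + 2"
proof -
  have "(M, N) \<notin> W" "(Suc M, N) \<notin> W"
    using assms by (auto simp: line_cover_def)
  then show ?thesis using line_cover_finite[OF assms] by simp
qed

lemma line_cover_2_1: "line_cover 2 1 {(0, 0), (1, 0)}"
  unfolding line_cover_def isolated_in_def same_line_def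
  by (auto simp: numeral_eq_Suc lessThan_Suc)

lemma line_cover_2_2: "line_cover 2 2 {(0, 0), (0, 1), (1, 0)}"
  unfolding line_cover_def isolated_in_def same_line_def
  by (auto simp: numeral_eq_Suc lessThan_Suc)

lemma line_cover_3_2: "line_cover 3 2 {(0, 0), (1, 0), (2, 0), (0, 1)}"
  unfolding line_cover_def isolated_in_def same_line_def
  by (auto simp: numeral_eq_Suc lessThan_Suc)

lemma line_cover_exists:
  assumes "1 \<le> M" "1 \<le> N" "M \<le> 2 * N" "N \<le> 2 * M" "(M, N) \<noteq> (1, 1)"
  shows "\<exists>W. line_cover M N W \<and> 3 * card W \<le> 2 * (M + N) + 2"
  using assms
proof (induction "M + N" arbitrary: M N rule: less_induct)
  case less
  have ordered: "\<exists>W. line_cover M' N' W \<and> 3 * card W \<le> 2 * (M' + N') + 2"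
    if "M' + N' = M + N" "N' \<le> M'" "1 \<le> N'" "M' \<le> 2 * N'" "(M', N') \<noteq> (1, 1)" for M' N'
  proof (cases "3 \<le> M' \<and> 2 \<le> N' \<and> (M', N') \<noteq> (3, 2)")
    case True
    then obtain M0 N0 where MN: "M' = M0 + 2" "N' = N0 + 1"
      by (metis add.commute le_Suc_ex numeral_3_eq_3 one_add_one add_2_eq_Suc le_add2 le_trans)
    then have "M0 + N0 < M + N" "1 \<le> M0" "1 \<le> N0" "M0 \<le> 2 * N0" "N0 \<le> 2 * M0"
      "(M0, N0) \<noteq> (1, 1)"
      using True that(1,2,4) by auto
    then obtain W where W: "line_cover M0 N0 W" "3 * card W \<le> 2 * (M0 + N0) + 2"
      using less.hyps by blast
    show ?thesis
      using line_cover_extend[OF W(1)] card_line_cover_extend[OF W(1)] W(2) MN by auto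
  next
    case False
    then have "(M', N') \<in> {(2, 1), (2, 2), (3, 2)}"
      using that(2-5) by auto
    then show ?thesis
      using line_cover_2_1 line_cover_2_2 line_cover_3_2 by fastforce
  qed
  show ?case
  proof (cases "N \<le> M")
    case True
    then show ?thesis using ordered less.prems by blast
  next
    case False
    then obtain W where "line_cover N M W" "3 * card W \<le> 2 * (N + M) + 2"
      using ordered[of N M] less.prems by auto
    moreover have "card (prod.swap ` W) = card W"
      by (simp add: card_image)
    ultimately show ?thesis
      using line_cover_swap by (metis add.commute)
  qed
qed

lemma line_cover_resolving:
  assumes "line_cover M N W"
  shows "complete_tensor_resolving {..<Suc M} {..<Suc N} W"
proof (rule complete_tensor_resolvingI)
  show "W \<subseteq> {..<Suc M} \<times> {..<Suc N}"
    using assms by (auto simp: line_cover_def)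
  have "{..<Suc M} - fst ` W = {M}" "{..<Suc N} - snd ` W = {N}"
    using assms by (auto simp: line_cover_def)
  then show "card ({..<Suc M} - fst ` W) \<le> 1" "card ({..<Suc N} - snd ` W) \<le> 1"
    by simp_all
  show "\<forall>w\<in>W. \<not> isolated_in W w"
    using assms by (simp add: line_cover_def)
qed simp_all

lemma metric_dim_eqI:
  assumes "resolving V E W" "finite W"
    and "\<And>W'. finite W' \<Longrightarrow> resolving V E W' \<Longrightarrow> card W \<le> card W'"
  shows "metric_dim V E = card W"
  unfolding metric_dim_def
  by (rule Least_equality) (use assms in auto)

lemma ceiling_two_thirds_eq:
  fixes k t :: nat
  assumes "2 * t \<le> 3 * k" "3 * k \<le> 2 * t + 2"
  shows "\<lceil>(2 / 3 :: real) * real t\<rceil> = int k"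
proof -
  have "2 * real t \<le> 3 * real k" "3 * real k \<le> 2 * real t + 2"
    using assms by (simp_all add: of_nat_mult[symmetric] del: of_nat_mult)
  then show ?thesis
    unfolding ceiling_eq_iff by auto
qed

theorem proposition3p6:
  fixes m n :: nat
  assumes "m \<ge> 3" and "m \<le> n" and "n \<le> 2 * m - 2"
  shows "int (metric_dim (tensor_verts (complete_verts m) (complete_verts n))
                         (tensor_adj complete_adj complete_adj))
         = \<lceil>(2 / 3 :: real) * (real m + real n - 2)\<rceil>"
proof -
  let ?V = "tensor_verts (complete_verts m) (complete_verts n)"
  let ?E = "tensor_adj complete_adj complete_adj"
  have "3 \<le> n" using assms by linarith
  have resolving_iff: "resolving ?V ?E W \<longleftrightarrow> complete_tensor_resolving {..<m} {..<n} W" for W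
    using resolving_tensor_complete_iff \<open>3 \<le> m\<close> \<open>3 \<le> n\<close> by blast
  have lower: "2 * (m + n) \<le> 3 * card W + 4" if "complete_tensor_resolving {..<m} {..<n} W" for W
    using complete_tensor_resolving_card_ge[OF that] \<open>3 \<le> m\<close> \<open>3 \<le> n\<close>
    by (simp add: lessThan_empty_iff)
  obtain W where cover: "line_cover (m - 1) (n - 1) W" and upper: "3 * card W \<le> 2 * (m + n - 2) + 2"
    using line_cover_exists[of "m - 1" "n - 1"] assms by force
  have "complete_tensor_resolving {..<m} {..<n} W"
    using line_cover_resolving[OF cover] \<open>3 \<le> m\<close> \<open>3 \<le> n\<close> by simp
  moreover have "card W \<le> card W'" if "complete_tensor_resolving {..<m} {..<n} W'" for W'
  proof -
    have "3 * card W < 3 * (card W' + 1)" using lower[OF that] upper \<open>3 \<le> m\<close> by arith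
    then show ?thesis by simp
  qed
  ultimately have "metric_dim ?V ?E = card W"
    using line_cover_finite[OF cover] by (intro metric_dim_eqI) (auto simp: resolving_iff)
  moreover have "\<lceil>(2 / 3 :: real) * real (m + n - 2)\<rceil> = int (card W)"
    using lower[OF \<open>complete_tensor_resolving {..<m} {..<n} W\<close>] upper
    by (intro ceiling_two_thirds_eq) auto
  ultimately show ?thesis
    using \<open>3 \<le> m\<close> by (simp add: of_nat_diff)
qed

end
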